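(* Let $n\ge 3$ and $u,v,w>0$. Let $A\in\mathbb{R}^{n\times n}$ be the Toeplitz matrix with $A_{ii}=w$ for all $i$, $A_{i,i+1}=u$ and $A_{i+1,i}=v$ for $i=1,\dots,n-1$, $A_{1n}=u$, $A_{n1}=v$, and all other entries $0$; that is, $$A=\begin{pmatrix} w & u & 0 & \cdots & 0 & u\\ v & w & u & \cdots & 0 & 0\\ 0 & v & w & \ddots & & \vdots\\ \vdots & & \ddots & \ddots & \ddots & 0\\ 0 & & & v & w & u\\ v & 0 & \cdots & 0 & v & w\end{pmatrix}.$$ Then $r(t):=r\big((1-t)A+tA^{\top}\big)$ is concave in $t$ for $t\in(0,1)$, strictly concave if $u\ne v$.
   Context: $r(M)$ denotes the spectral radius of a square matrix $M$. *)

theory Defs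
  imports "HOL-Analysis.Convex" "Jordan_Normal_Form.Spectral_Radius"
begin

definition toep_mat :: "nat \<Rightarrow> real \<Rightarrow> real \<Rightarrow> real \<Rightarrow> real mat" where
  "toep_mat n u v w = mat n n (\<lambda>(i,j).
     if i = j then w
     else if j = i + 1 then u
     else if i = j + 1 then v
     else if i = 0 \<and> j = n - 1 then u
     else if i = n - 1 \<and> j = 0 then v
     else 0)"

definition real_spectral_radius :: "real mat \<Rightarrow> real" where
  "real_spectral_radius M = spectral_radius (map_mat complex_of_real M)"

definition strictly_concave_on :: "real set \<Rightarrow> (real \<Rightarrow> real) \<Rightarrow> bool" where
  "strictly_concave_on S f \<longleftrightarrow> convex S \<and>
    (\<forall>x\<in>S. \<forall>y\<in>S. \<forall>a. x \<noteq> y \<and> 0 < a \<and> a < 1 \<longrightarrow>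
       f (a * x + (1 - a) * y) > a * f x + (1 - a) * f y)"

end

(*
  For 0 < t < 1 the matrix (1 - t) A + t A^T is again of the form toep_mat n a b w, with
  a = (1 - t) u + t v and b = (1 - t) v + t u.  The geometric vector (q^j) with q^n = b / a is a
  positive eigenvector, with eigenvalue w + a q + b / q = w + a^(1-1/n) b^(1/n) + a^(1/n) b^(1-1/n);
  for a nonnegative matrix the eigenvalue of a positive eigenvector is the spectral radius
  (compare an eigenvector y with x at the index maximising |y_j| / x_j).  A weighted geometric
  mean of two positive affine functions of t is concave by Hoelder's inequality, and strictly so
  unless the two functions are proportional; a and b are proportional only when u = v.
*)
theory Submission
  imports Defs
begin

definition geom_mean :: "real \<Rightarrow> real \<Rightarrow> real \<Rightarrow> real" where
  "geom_mean \<alpha> a b = a powr \<alpha> * b powr (1 - \<alpha>)"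

lemma geom_mean_pos: "0 < a \<Longrightarrow> 0 < b \<Longrightarrow> 0 < geom_mean \<alpha> a b"
  by (simp add: geom_mean_def)

lemma geom_mean_divide:
  "0 < a \<Longrightarrow> 0 < b \<Longrightarrow> 0 < c \<Longrightarrow> 0 < d \<Longrightarrow>
    geom_mean \<alpha> (a / c) (b / d) = geom_mean \<alpha> a b / geom_mean \<alpha> c d"
  by (simp add: geom_mean_def powr_divide)

lemma geom_mean_le_arith_mean:
  "0 \<le> \<alpha> \<Longrightarrow> \<alpha> \<le> 1 \<Longrightarrow> 0 < a \<Longrightarrow> 0 < b \<Longrightarrow> geom_mean \<alpha> a b \<le> \<alpha> * a + (1 - \<alpha>) * b"
  unfolding geom_mean_def by (rule Youngs_inequality_0) auto

lemma geom_mean_less_arith_mean: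
  assumes "0 < \<alpha>" "\<alpha> < 1" "0 < a" "0 < b" "a \<noteq> b"
  shows "geom_mean \<alpha> a b < \<alpha> * a + (1 - \<alpha>) * b"
proof -
  define m where "m = \<alpha> * a + (1 - \<alpha>) * b"
  have m: "0 < m"
    unfolding m_def using assms by (simp add: add_pos_pos)
  have "m - a = (1 - \<alpha>) * (b - a)" "m - b = \<alpha> * (a - b)"
    unfolding m_def by (simp_all add: algebra_simps)
  then have "a \<noteq> m" "b \<noteq> m"
    using assms by auto
  then have "\<alpha> * (ln a - ln m) + (1 - \<alpha>) * (ln b - ln m)
      < \<alpha> * ((a - m) / m) + (1 - \<alpha>) * ((b - m) / m)"
    using assms m by (intro add_strict_mono mult_strict_left_mono ln_diff_less) auto
  also have "\<dots> = 0"
    using m unfolding m_def by (simp add: field_simps)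
  finally have "\<alpha> * ln a + (1 - \<alpha>) * ln b < ln m"
    by (simp add: algebra_simps)
  then have "exp (\<alpha> * ln a + (1 - \<alpha>) * ln b) < m"
    using m by (metis exp_less_cancel_iff exp_ln)
  then show ?thesis
    using assms by (simp add: geom_mean_def powr_def exp_add m_def)
qed

lemma geom_mean_jointly_concave:
  assumes \<alpha>: "0 < \<alpha>" "\<alpha> < 1" and l: "0 < l" "l < 1"
    and pos: "0 < a1" "0 < b1" "0 < a2" "0 < b2"
  defines "a \<equiv> l * a1 + (1 - l) * a2" and "b \<equiv> l * b1 + (1 - l) * b2"
  shows "l * geom_mean \<alpha> a1 b1 + (1 - l) * geom_mean \<alpha> a2 b2 \<le> geom_mean \<alpha> a b"
    and "a1 * b2 \<noteq> a2 * b1 \<Longrightarrow>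
      l * geom_mean \<alpha> a1 b1 + (1 - l) * geom_mean \<alpha> a2 b2 < geom_mean \<alpha> a b"
proof -
  have a: "0 < a" and b: "0 < b"
    unfolding a_def b_def using l pos by (simp_all add: add_pos_pos)
  define s where "s = l * geom_mean \<alpha> (a1 / a) (b1 / b) + (1 - l) * geom_mean \<alpha> (a2 / a) (b2 / b)"
  define s' where "s' = l * (\<alpha> * (a1 / a) + (1 - \<alpha>) * (b1 / b))
    + (1 - l) * (\<alpha> * (a2 / a) + (1 - \<alpha>) * (b2 / b))"
  \<comment> \<open>Normalising by the mean point turns Young's inequality at the two points into Hoelder's.\<close>
  have "s = (l * geom_mean \<alpha> a1 b1 + (1 - l) * geom_mean \<alpha> a2 b2) / geom_mean \<alpha> a b"
    unfolding s_def using a b pos by (simp add: geom_mean_divide add_divide_distrib)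
  then have normalised: "l * geom_mean \<alpha> a1 b1 + (1 - l) * geom_mean \<alpha> a2 b2 = geom_mean \<alpha> a b * s"
    using geom_mean_pos[OF a b, of \<alpha>] by simp
  have "s' = \<alpha> * ((l * a1 + (1 - l) * a2) / a) + (1 - \<alpha>) * ((l * b1 + (1 - l) * b2) / b)"
    unfolding s'_def using a b by (simp add: field_simps)
  then have s': "s' = 1"
    using a b by (simp add: a_def[symmetric] b_def[symmetric])
  have "s \<le> s'"
    unfolding s_def s'_def using \<alpha> l pos a b
    by (intro add_mono mult_left_mono geom_mean_le_arith_mean) auto
  then show "l * geom_mean \<alpha> a1 b1 + (1 - l) * geom_mean \<alpha> a2 b2 \<le> geom_mean \<alpha> a b"
    unfolding normalised s' using geom_mean_pos[OF a b, of \<alpha>] by simp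
  assume "a1 * b2 \<noteq> a2 * b1"
  moreover have "a1 * b - b1 * a = (1 - l) * (a1 * b2 - a2 * b1)"
    unfolding a_def b_def by (simp add: algebra_simps)
  ultimately have "a1 * b \<noteq> b1 * a"
    using l by auto
  then have "a1 / a \<noteq> b1 / b"
    using a b by (simp add: field_simps)
  then have "s < s'"
    unfolding s_def s'_def using \<alpha> l pos a b
    by (intro add_less_le_mono mult_strict_left_mono mult_left_mono
        geom_mean_less_arith_mean geom_mean_le_arith_mean) auto
  then show "l * geom_mean \<alpha> a1 b1 + (1 - l) * geom_mean \<alpha> a2 b2 < geom_mean \<alpha> a b"
    unfolding normalised s' using geom_mean_pos[OF a b, of \<alpha>] by simp
qed

lemma affine_combination_pos: "0 \<le> t \<Longrightarrow> t \<le> 1 \<Longrightarrow> 0 < u \<Longrightarrow> 0 < v \<Longrightarrow> 0 < (1 - t) * u + t * v"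
  for t u v :: real
  using convex_bound_lt[of "- u" 0 "- v" "1 - t" t] by simp

lemma geom_mean_affine_combination:
  fixes \<alpha> u v u' v' :: real
  assumes \<alpha>: "0 < \<alpha>" "\<alpha> < 1" and pos: "0 < u" "0 < v" "0 < u'" "0 < v'"
    and xy: "x \<in> {0..1}" "y \<in> {0..1}" and l: "0 < l" "l < 1"
  defines "g \<equiv> \<lambda>t. geom_mean \<alpha> ((1 - t) * u + t * v) ((1 - t) * u' + t * v')"
  shows "l * g x + (1 - l) * g y \<le> g (l * x + (1 - l) * y)"
    and "x \<noteq> y \<Longrightarrow> u * v' \<noteq> u' * v \<Longrightarrow> l * g x + (1 - l) * g y < g (l * x + (1 - l) * y)"
proof -
  define a where "a t = (1 - t) * u + t * v" for t
  define b where "b t = (1 - t) * u' + t * v'" for t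
  have g: "g t = geom_mean \<alpha> (a t) (b t)" for t
    unfolding g_def a_def b_def ..
  have "0 < a x" "0 < b x" "0 < a y" "0 < b y"
    using xy pos unfolding a_def b_def by (auto intro: affine_combination_pos)
  note concave = geom_mean_jointly_concave[OF \<alpha> l this]
  have affine: "a (l * x + (1 - l) * y) = l * a x + (1 - l) * a y"
    "b (l * x + (1 - l) * y) = l * b x + (1 - l) * b y"
    unfolding a_def b_def by (simp_all add: algebra_simps)
  show "l * g x + (1 - l) * g y \<le> g (l * x + (1 - l) * y)"
    unfolding g affine by (rule concave(1))
  assume "x \<noteq> y" "u * v' \<noteq> u' * v"
  moreover have "a x * b y - a y * b x = (x - y) * (u' * v - u * v')"
    unfolding a_def b_def by (simp add: algebra_simps)
  ultimately have "a x * b y \<noteq> a y * b x"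
    by auto
  then show "l * g x + (1 - l) * g y < g (l * x + (1 - l) * y)"
    unfolding g affine by (rule concave(2))
qed

lemma concave_on_geom_mean_affine:
  fixes \<alpha> u v u' v' :: real
  assumes "0 < \<alpha>" "\<alpha> < 1" "0 < u" "0 < v" "0 < u'" "0 < v'" "convex S" "S \<subseteq> {0..1}"
  shows "concave_on S (\<lambda>t. geom_mean \<alpha> ((1 - t) * u + t * v) ((1 - t) * u' + t * v'))"
    (is "concave_on S ?g")
  unfolding concave_on_def
proof (rule convex_onI[OF _ \<open>convex S\<close>])
  fix t x y :: real
  assume "0 < t" "t < 1" "x \<in> S" "y \<in> S"
  then have "(1 - t) * ?g x + (1 - (1 - t)) * ?g y \<le> ?g ((1 - t) * x + (1 - (1 - t)) * y)"
    using assms by (intro geom_mean_affine_combination(1)) auto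
  then show "- ?g ((1 - t) *\<^sub>R x + t *\<^sub>R y) \<le> (1 - t) * - ?g x + t * - ?g y"
    by simp
qed

lemma strictly_concave_on_geom_mean_affine:
  fixes \<alpha> u v u' v' :: real
  assumes "0 < \<alpha>" "\<alpha> < 1" "0 < u" "0 < v" "0 < u'" "0 < v'" "convex S" "S \<subseteq> {0..1}"
    and "u * v' \<noteq> u' * v"
  shows "strictly_concave_on S (\<lambda>t. geom_mean \<alpha> ((1 - t) * u + t * v) ((1 - t) * u' + t * v'))"
  unfolding strictly_concave_on_def
  using geom_mean_affine_combination(2)[of \<alpha> u v u' v'] assms by blast

lemma concave_on_cong:
  assumes "convex S" "\<And>x. x \<in> S \<Longrightarrow> f x = g x"
  shows "concave_on S f \<longleftrightarrow> concave_on S g"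
  using assms unfolding concave_on_iff convex_def by (smt (verit))

lemma strictly_concave_on_cong:
  assumes "\<And>x. x \<in> S \<Longrightarrow> f x = g x"
  shows "strictly_concave_on S f \<longleftrightarrow> strictly_concave_on S g"
proof -
  have "a * x + (1 - a) * y \<in> S" if "convex S" "x \<in> S" "y \<in> S" "0 < a" "a < 1" for a x y
    using that convexD[of S x y a "1 - a"] by simp
  then show ?thesis
    using assms unfolding strictly_concave_on_def by (smt (verit))
qed

lemma strictly_concave_on_add:
  assumes "strictly_concave_on S f" "concave_on S g"
  shows "strictly_concave_on S (\<lambda>x. f x + g x)"
  unfolding strictly_concave_on_def
proof (intro conjI ballI allI impI)
  show "convex S"
    using assms(1) unfolding strictly_concave_on_def by simp
  fix x y a :: real
  assume xy: "x \<in> S" "y \<in> S" and a: "x \<noteq> y \<and> 0 < a \<and> a < 1"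
  then have "f (a * x + (1 - a) * y) > a * f x + (1 - a) * f y"
    using assms(1) unfolding strictly_concave_on_def by blast
  moreover have "g (a * x + (1 - a) * y) \<ge> a * g x + (1 - a) * g y"
    using concave_onD[OF assms(2), of "1 - a" x y] xy a by simp
  ultimately show "a * (f x + g x) + (1 - a) * (f y + g y) < f (a * x + (1 - a) * y) + g (a * x + (1 - a) * y)"
    by (simp add: algebra_simps)
qed

lemma mult_mat_vec_nth:
  "A \<in> carrier_mat n n \<Longrightarrow> x \<in> carrier_vec n \<Longrightarrow> i < n \<Longrightarrow>
    (A *\<^sub>v x) $ i = (\<Sum>j<n. A $$ (i, j) * x $ j)"
  by (simp add: scalar_prod_def lessThan_atLeast0 row_def)

lemma norm_eigenvalue_le_of_pos_vec:
  fixes B :: "real mat" and x :: "real vec"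
  assumes B: "B \<in> carrier_mat n n" and nonneg: "\<And>i j. i < n \<Longrightarrow> j < n \<Longrightarrow> 0 \<le> B $$ (i, j)"
    and x: "x \<in> carrier_vec n" and x_pos: "\<And>i. i < n \<Longrightarrow> 0 < x $ i"
    and bound: "\<And>i. i < n \<Longrightarrow> (B *\<^sub>v x) $ i \<le> \<rho> * x $ i"
    and ev: "eigenvalue (map_mat complex_of_real B) \<mu>"
  shows "norm \<mu> \<le> \<rho>"
proof -
  define C where "C = map_mat complex_of_real B"
  have C: "C \<in> carrier_mat n n"
    using B unfolding C_def by simp
  obtain y where y: "y \<in> carrier_vec n" "y \<noteq> 0\<^sub>v n" "C *\<^sub>v y = \<mu> \<cdot>\<^sub>v y"
    using ev C unfolding C_def[symmetric] eigenvalue_def eigenvector_def by auto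
  define f where "f j = norm (y $ j) / x $ j" for j
  have "n \<noteq> 0"
    using y by auto
  then obtain k where k: "k < n" "Max (f ` {..<n}) = f k"
    using obtains_MAX[of "{..<n}" f] by auto
  have y_le: "norm (y $ j) \<le> f k * x $ j" if "j < n" for j
    using Max_ge[of "f ` {..<n}" "f j"] that x_pos[OF that] k unfolding f_def
    by (simp add: divide_le_eq)
  have f_nonneg: "0 \<le> f k"
    unfolding f_def using x_pos[OF k(1)] by simp
  have "\<mu> * y $ k = (C *\<^sub>v y) $ k"
    using y k by simp
  also have "\<dots> = (\<Sum>j<n. complex_of_real (B $$ (k, j)) * y $ j)"
    using mult_mat_vec_nth[OF C y(1) k(1)] B k unfolding C_def by simp
  finally have "norm \<mu> * norm (y $ k) = norm (\<Sum>j<n. complex_of_real (B $$ (k, j)) * y $ j)"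
    by (simp flip: norm_mult)
  also have "\<dots> \<le> (\<Sum>j<n. B $$ (k, j) * (f k * x $ j))"
    using nonneg k y_le
    by (intro order.trans[OF norm_sum] sum_mono) (simp add: norm_mult mult_left_mono)
  also have "\<dots> = f k * (B *\<^sub>v x) $ k"
    unfolding mult_mat_vec_nth[OF B x k(1)] by (simp add: sum_distrib_left algebra_simps)
  also have "\<dots> \<le> \<rho> * (f k * x $ k)"
    using mult_left_mono[OF bound[OF k(1)] f_nonneg] by (metis mult.left_commute)
  also have "f k * x $ k = norm (y $ k)"
    unfolding f_def using x_pos[OF k(1)] by simp
  finally have "norm \<mu> * norm (y $ k) \<le> \<rho> * norm (y $ k)" .
  moreover have "y $ k \<noteq> 0"
  proof
    assume "y $ k = 0"
    then have "y $ j = 0" if "j < n" for j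
      using y_le[OF that] x_pos[OF that] by (simp add: f_def)
    then show False
      using y by auto
  qed
  ultimately show ?thesis
    by simp
qed

lemma real_spectral_radius_eq_of_pos_eigenvector:
  fixes B :: "real mat" and x :: "real vec"
  assumes B: "B \<in> carrier_mat n n" and "0 < n"
    and nonneg: "\<And>i j. i < n \<Longrightarrow> j < n \<Longrightarrow> 0 \<le> B $$ (i, j)"
    and x: "x \<in> carrier_vec n" and x_pos: "\<And>i. i < n \<Longrightarrow> 0 < x $ i"
    and eigen: "B *\<^sub>v x = \<rho> \<cdot>\<^sub>v x"
  shows "real_spectral_radius B = \<rho>"
proof -
  define C where "C = map_mat complex_of_real B"
  have C: "C \<in> carrier_mat n n"
    using B unfolding C_def by simp
  have "\<rho> * x $ 0 = (\<Sum>j<n. B $$ (0, j) * x $ j)"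
    using eigen B x \<open>0 < n\<close> by (metis index_smult_vec(1) carrier_vecD mult_mat_vec_nth)
  also have "\<dots> \<ge> 0"
    using nonneg x_pos \<open>0 < n\<close> by (intro sum_nonneg) (simp add: less_imp_le)
  finally have "0 \<le> \<rho>"
    using x_pos[OF \<open>0 < n\<close>] by (simp add: zero_le_mult_iff)
  have "eigenvector B x \<rho>"
    using B x eigen x_pos[OF \<open>0 < n\<close>] \<open>0 < n\<close> unfolding eigenvector_def by auto
  then have "eigenvalue C (complex_of_real \<rho>)"
    unfolding C_def using of_real_hom.eigenvalue_hom[OF B] eigenvalue_def by blast
  then have "\<rho> \<le> spectral_radius C"
    using spectral_radius_mem_max(2)[OF C \<open>0 < n\<close>] \<open>0 \<le> \<rho>\<close>
    unfolding spectrum_def by force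
  moreover obtain \<mu> where "eigenvalue C \<mu>" "spectral_radius C = norm \<mu>"
    using spectral_radius_mem_max(1)[OF C \<open>0 < n\<close>] unfolding spectrum_def by auto
  moreover have "norm \<mu> \<le> \<rho>" if "eigenvalue C \<mu>" for \<mu>
    using norm_eigenvalue_le_of_pos_vec[OF B nonneg x x_pos _ that[unfolded C_def]] eigen x
    by simp
  ultimately show ?thesis
    unfolding real_spectral_radius_def C_def[symmetric] by fastforce
qed

lemma toep_mat_carrier: "toep_mat n u v w \<in> carrier_mat n n"
  by (simp add: toep_mat_def)

lemma toep_mat_convex_transpose:
  assumes "3 \<le> n"
  shows "(1 - t) \<cdot>\<^sub>m toep_mat n u v w + t \<cdot>\<^sub>m transpose_mat (toep_mat n u v w)
    = toep_mat n ((1 - t) * u + t * v) ((1 - t) * v + t * u) w"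
  using assms by (intro eq_matI) (auto simp: toep_mat_def algebra_simps)

lemma toep_mat_nth:
  assumes "3 \<le> n" "i < n" "j < n"
  shows "toep_mat n a b w $$ (i, j) = (if j = i then w else 0) + (if j = i + 1 then a else 0)
    + (if i = 0 \<and> j = n - 1 then a else 0) + (if 1 \<le> i \<and> j = i - 1 then b else 0)
    + (if i = n - 1 \<and> j = 0 then b else 0)"
  using assms by (auto simp: toep_mat_def)

lemma toep_mat_mult_geometric_vec:
  assumes n: "3 \<le> n" and q: "q \<noteq> 0" and qn: "a * q ^ n = b"
  shows "toep_mat n a b w *\<^sub>v vec n (\<lambda>j. q ^ j) = (w + a * q + b / q) \<cdot>\<^sub>v vec n (\<lambda>j. q ^ j)"
proof (rule eq_vecI)
  fix i
  assume "i < dim_vec ((w + a * q + b / q) \<cdot>\<^sub>v vec n (\<lambda>j. q ^ j))"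
  then have i: "i < n"
    by simp
  have "(toep_mat n a b w *\<^sub>v vec n (\<lambda>j. q ^ j)) $ i = (\<Sum>j<n. toep_mat n a b w $$ (i, j) * q ^ j)"
    using mult_mat_vec_nth[OF toep_mat_carrier _ i] by simp
  also have "\<dots> = w * q ^ i + (if i + 1 < n then a * q ^ (i + 1) else 0)
      + (if i = 0 then a * q ^ (n - 1) else 0) + (if 1 \<le> i then b * q ^ (i - 1) else 0)
      + (if i = n - 1 then b else 0)"
    using n i
    by (simp add: toep_mat_nth distrib_right sum.distrib if_distrib[of "\<lambda>z. z * _"] sum.delta'
        cong: if_cong)
  also have "\<dots> = (w + a * q + b / q) * q ^ i"
  proof -
    consider "i = 0" | "i = n - 1" | "0 < i \<and> i < n - 1"
      using i by linarith
    then show ?thesis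
    proof cases
      case 1
      have "a * q ^ (n - 1) * q = b"
        using power_minus_mult[of n q] qn n by (simp add: mult.assoc)
      then show ?thesis
        using 1 n q by (simp add: field_simps)
    next
      case 2
      obtain k where "n = Suc (Suc (Suc k))"
        using n by (metis add.commute add_Suc_right le_Suc_ex numeral_3_eq_3 plus_nat.add_0)
      then show ?thesis
        using 2 q qn by (simp add: field_simps)
    next
      case 3
      then obtain k where "i = Suc k"
        using gr0_implies_Suc by blast
      then show ?thesis
        using 3 q by (simp add: field_simps)
    qed
  qed
  finally show "(toep_mat n a b w *\<^sub>v vec n (\<lambda>j. q ^ j)) $ i
      = ((w + a * q + b / q) \<cdot>\<^sub>v vec n (\<lambda>j. q ^ j)) $ i"
    using i by simp
qed (simp add: toep_mat_def)

lemma real_spectral_radius_toep_mat: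
  assumes n: "3 \<le> n" and a: "0 < a" and b: "0 < b" and w: "0 \<le> w"
  shows "real_spectral_radius (toep_mat n a b w)
    = w + geom_mean (1 - 1 / real n) a b + geom_mean (1 / real n) a b"
proof -
  define q where "q = (b / a) powr (1 / real n)"
  have q: "0 < q"
    using a b by (simp add: q_def)
  have "q ^ n = (b / a) powr (1 / real n * real n)"
    using q by (simp add: q_def powr_powr flip: powr_realpow)
  then have "a * q ^ n = b"
    using n a b by simp
  then have "toep_mat n a b w *\<^sub>v vec n (\<lambda>j. q ^ j) = (w + a * q + b / q) \<cdot>\<^sub>v vec n (\<lambda>j. q ^ j)"
    using n q by (intro toep_mat_mult_geometric_vec) auto
  then have "real_spectral_radius (toep_mat n a b w) = w + a * q + b / q"
  proof (rule real_spectral_radius_eq_of_pos_eigenvector[OF toep_mat_carrier, rotated -1])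
    show "0 \<le> toep_mat n a b w $$ (i, j)" if "i < n" "j < n" for i j
      using that n a b w by (simp add: toep_mat_nth)
    show "0 < vec n (\<lambda>j. q ^ j) $ i" if "i < n" for i
      using that q by simp
  qed (use n in auto)
  moreover have "a * q = geom_mean (1 - 1 / real n) a b" "b / q = geom_mean (1 / real n) a b"
    using a b by (simp_all add: q_def geom_mean_def powr_divide powr_diff field_simps)
  ultimately show ?thesis
    by simp
qed

lemma real_spectral_radius_toep_mat_interpolation:
  assumes "3 \<le> n" "0 < u" "0 < v" "0 \<le> w" "0 \<le> t" "t \<le> 1"
  shows "real_spectral_radius ((1 - t) \<cdot>\<^sub>m toep_mat n u v w + t \<cdot>\<^sub>m transpose_mat (toep_mat n u v w))
    = geom_mean (1 - 1 / real n) ((1 - t) * u + t * v) ((1 - t) * v + t * u)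
      + geom_mean (1 / real n) ((1 - t) * u + t * v) ((1 - t) * v + t * u) + w"
  using assms
  by (simp add: toep_mat_convex_transpose real_spectral_radius_toep_mat affine_combination_pos)

theorem theorem4:
  fixes n :: nat and u v w :: real
  assumes "n \<ge> 3" and "u > 0" and "v > 0" and "w > 0"
  defines "A \<equiv> toep_mat n u v w"
  defines "r \<equiv> (\<lambda>t::real. real_spectral_radius ((1 - t) \<cdot>\<^sub>m A + t \<cdot>\<^sub>m transpose_mat A))"
  shows "concave_on {0<..<1} r \<and> (u \<noteq> v \<longrightarrow> strictly_concave_on {0<..<1} r)"
proof -
  define p where "p = 1 / real n"
  define g where "g \<alpha> t = geom_mean \<alpha> ((1 - t) * u + t * v) ((1 - t) * v + t * u)" for \<alpha> t
  define F where "F t = g (1 - p) t + g p t + w" for t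
  have p: "0 < p" "p < 1"
    unfolding p_def using assms(1) by auto
  have S: "convex {0<..<1::real}" "{0<..<1::real} \<subseteq> {0..1}"
    by auto
  have r: "r t = F t" if "t \<in> {0<..<1}" for t
    using that assms(1-4)
    by (simp add: r_def A_def F_def g_def p_def real_spectral_radius_toep_mat_interpolation)
  have g_concave: "concave_on {0<..<1} (g \<alpha>)" if "0 < \<alpha>" "\<alpha> < 1" for \<alpha>
    unfolding g_def using that assms(2,3) S by (intro concave_on_geom_mean_affine) auto
  have w_concave: "concave_on {0<..<1::real} (\<lambda>_. w)"
    unfolding concave_on_const by (rule S(1))
  have "concave_on {0<..<1} F"
    unfolding F_def using p by (intro concave_on_add g_concave w_concave) auto
  moreover have "strictly_concave_on {0<..<1} F" if "u \<noteq> v"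
  proof -
    have "u * u \<noteq> v * v"
      using that assms(2,3) by (simp add: power2_eq_iff_nonneg flip: power2_eq_square)
    then have "strictly_concave_on {0<..<1} (g (1 - p))"
      unfolding g_def using p S assms(2,3) by (intro strictly_concave_on_geom_mean_affine) auto
    then have "strictly_concave_on {0<..<1} (\<lambda>t. g (1 - p) t + g p t)"
      using g_concave[OF p] by (rule strictly_concave_on_add)
    then show ?thesis
      unfolding F_def using w_concave by (rule strictly_concave_on_add)
  qed
  moreover have "concave_on {0<..<1} r \<longleftrightarrow> concave_on {0<..<1} F"
    using S(1) r by (rule concave_on_cong)
  moreover have "strictly_concave_on {0<..<1} r \<longleftrightarrow> strictly_concave_on {0<..<1} F"
    using r by (rule strictly_concave_on_cong)
  ultimately show ?thesis
    by simp
qed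

end
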